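(* Consider the $M_t^{B_t}/G_t/\infty$ queue described in the context, starting empty, and suppose that when a batch arrives at time $s$ its customers bring i.i.d. exponentially distributed amounts of work with rate $\mu_s>0$, independent of everything else. Then for all $t\ge0$ and $\alpha,\beta,\gamma\ge0$, $$\mathbb{E}\big[e^{-\alpha W(t)-\beta Q(t)-\gamma D(t)}\big]=\exp\Big(-\int_0^t\mathcal{E}_s\Big[1-\Big[(1-e^{-\mu_s(t-s)})e^{-\gamma}+\frac{\mu_s}{\mu_s+\alpha}e^{-\beta}e^{-\mu_s(t-s)}\Big]^{B_s}\Big]\lambda(s)\,ds\Big).$$
   Context: Model: batches arrive at the points of a non-homogeneous Poisson process on $[0,\infty)$ with rate function $\lambda$; a batch arriving at time $s$ has random positive-integer size $B_s$ (law depending on $s$), batches being independent of each other and of the arrival process; $\mathcal{E}_s$ denotes expectation over $B_s$. There are infinitely many servers; a customer arriving at time $s$ with work $S$ departs at $s+S$. $Q(t)$: number in system at time $t$; $D(t)$: number of departures in $(0,t]$; $W(t)$: workload at time $t$, the total remaining work $\sum(S-(t-s))^+$ over customers arrived by time $t$. *)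

theory Defs
  imports "HOL-Probability.Probability"
begin

type_synonym point = "real \<times> nat \<times> (nat \<Rightarrow> real)"
  \<comment> \<open>a marked arrival: (arrival time s, batch size b, works w 0, w 1, ...); only w 0..w (b-1) are used\<close>

definition point_space :: "point measure" where
  "point_space = borel \<Otimes>\<^sub>M (count_space UNIV \<Otimes>\<^sub>M (\<Pi>\<^sub>M i\<in>(UNIV::nat set). (borel :: real measure)))"

definition mark_law :: "(real \<Rightarrow> nat pmf) \<Rightarrow> (real \<Rightarrow> real) \<Rightarrow> real \<Rightarrow> (nat \<times> (nat \<Rightarrow> real)) measure" where
  "mark_law B mu s =
     measure_pmf (B s) \<Otimes>\<^sub>M (\<Pi>\<^sub>M i\<in>(UNIV::nat set). density lborel (exponential_density (mu s)))"

definition intensity :: "(real \<Rightarrow> real) \<Rightarrow> (real \<Rightarrow> nat pmf) \<Rightarrow> (real \<Rightarrow> real) \<Rightarrow> point set \<Rightarrow> ennreal" where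
  "intensity lam B mu A =
     (\<integral>\<^sup>+ s. indicator {0..} s * ennreal (lam s) * emeasure (mark_law B mu s) (Pair s -` A) \<partial>lborel)"

text \<open>Poisson random measure (point process with a.s. no multiple points) with intensity nu:
  counts of disjoint measurable sets are independent and Poisson distributed.\<close>
definition poisson_random_measure ::
  "'w measure \<Rightarrow> 'p measure \<Rightarrow> ('p set \<Rightarrow> ennreal) \<Rightarrow> ('w \<Rightarrow> 'p set) \<Rightarrow> bool" where
  "poisson_random_measure M S nu N \<longleftrightarrow>
     (\<forall>\<omega>\<in>space M. N \<omega> \<subseteq> space S) \<and>
     (\<forall>A\<in>sets S. nu A = \<infinity> \<longrightarrow> (AE \<omega> in M. infinite (N \<omega> \<inter> A))) \<and>
     (\<forall>A\<in>sets S. nu A < \<infinity> \<longrightarrow>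
        (\<lambda>\<omega>. card (N \<omega> \<inter> A)) \<in> measurable M (count_space UNIV) \<and>
        (AE \<omega> in M. finite (N \<omega> \<inter> A)) \<and>
        (\<forall>k::nat. measure M {\<omega>\<in>space M. card (N \<omega> \<inter> A) = k} =
                  enn2real (nu A) ^ k / fact k * exp (- enn2real (nu A)))) \<and>
     (\<forall>(I::nat set) (A::nat \<Rightarrow> 'p set). finite I \<longrightarrow> (\<forall>i\<in>I. A i \<in> sets S \<and> nu (A i) < \<infinity>) \<longrightarrow>
        disjoint_family_on A I \<longrightarrow>
        prob_space.indep_vars M (\<lambda>_. count_space UNIV) (\<lambda>i \<omega>. card (N \<omega> \<inter> A i)) I)"

text \<open>Arrivals by time t (the system starts empty: the intensity vanishes before time 0).\<close>
definition arrived :: "point set \<Rightarrow> real \<Rightarrow> point set" where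
  "arrived P t = {p\<in>P. fst p \<le> t}"

definition num_in_system :: "point set \<Rightarrow> real \<Rightarrow> nat" where
  "num_in_system P t = (\<Sum>(s,b,w)\<in>arrived P t. card {i. i < b \<and> t < s + w i})"

definition departures :: "point set \<Rightarrow> real \<Rightarrow> nat" where
  "departures P t = (\<Sum>(s,b,w)\<in>arrived P t. card {i. i < b \<and> 0 < s + w i \<and> s + w i \<le> t})"

definition workload :: "point set \<Rightarrow> real \<Rightarrow> real" where
  "workload P t = (\<Sum>(s,b,w)\<in>arrived P t. \<Sum>i<b. max 0 (w i - (t - s)))"

end

theory Submission
  imports Defs
begin

(* The Laplace functional of a Poisson random measure N with intensity measure nu is
   E exp (- sum over p in N with p in H of g p) = exp (- integral over H of (1 - exp (- g)) d nu).
   For g with finitely many values this is the product of the Laplace transforms of the independent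
   Poisson counts of its level sets; for general g >= 0 it follows by dyadic approximation and
   dominated convergence on both sides.
   The exponent alpha W(t) + beta Q(t) + gamma D(t) is such a sum over the batches arrived by time t,
   the cost of a batch being the sum of the costs of its customers.  Given the batch size b, the works
   are i.i.d. Exp(mu s), so 1 - E exp (- batch cost) = 1 - phi ^ b, where phi, the transform of the cost
   of one customer, is (1 - e^(-mu (t-s))) e^(-gamma) + mu/(mu+alpha) e^(-beta) e^(-mu (t-s)): the
   customer has left (cost gamma) or, by memorylessness, still holds an Exp(mu) residual work (cost
   beta plus alpha times the residual).  Integrating over the arrival time against lambda(s) ds gives
   the formula. *)

lemma nn_integral_nat_valued:
  fixes X :: "'w \<Rightarrow> nat"
  assumes X: "X \<in> measurable M (count_space UNIV)"
  shows "(\<integral>\<^sup>+\<omega>. f (X \<omega>) \<partial>M) = (\<Sum>k. f k * emeasure M {\<omega>\<in>space M. X \<omega> = k})"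
proof -
  have level_sets: "{\<omega>\<in>space M. X \<omega> = k} \<in> sets M" for k
    using X by (auto intro: measurable_sets_Collect)
  have "(\<integral>\<^sup>+\<omega>. f (X \<omega>) \<partial>M) = (\<integral>\<^sup>+\<omega>. (\<Sum>k. f k * indicator {\<omega>\<in>space M. X \<omega> = k} \<omega>) \<partial>M)"
  proof (rule nn_integral_cong)
    fix \<omega> assume "\<omega> \<in> space M"
    then have "(\<Sum>k. f k * indicator {\<omega>\<in>space M. X \<omega> = k} \<omega>) = (\<Sum>k. if k = X \<omega> then f k else 0)"
      by (intro suminf_cong) (auto simp: indicator_def)
    then show "f (X \<omega>) = (\<Sum>k. f k * indicator {\<omega>\<in>space M. X \<omega> = k} \<omega>)"
      using sums_unique[OF sums_single[of "X \<omega>" f]] by simp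
  qed
  also have "\<dots> = (\<Sum>k. f k * emeasure M {\<omega>\<in>space M. X \<omega> = k})"
    using level_sets by (simp add: nn_integral_suminf nn_integral_cmult_indicator)
  finally show ?thesis .
qed

lemma poisson_laplace_transform:
  fixes X :: "'w \<Rightarrow> nat"
  assumes "prob_space M" and X: "X \<in> measurable M (count_space UNIV)"
    and law: "\<And>k. measure M {\<omega>\<in>space M. X \<omega> = k} = l ^ k / fact k * exp (- l)"
    and l: "0 \<le> l" and c: "0 \<le> c"
  shows "(\<integral>\<omega>. exp (- c * real (X \<omega>)) \<partial>M) = exp (- (l * (1 - exp (- c))))"
proof -
  interpret prob_space M by fact
  define a where "a k = exp (- l) * ((l * exp (- c)) ^ k /\<^sub>R fact k)" for k
  have a_sums: "a sums (exp (- l) * exp (l * exp (- c)))"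
    unfolding a_def by (intro sums_mult exp_converges)
  have terms: "ennreal (exp (- c * real k)) * emeasure M {\<omega>\<in>space M. X \<omega> = k} = ennreal (a k)" for k
  proof -
    have "exp (- c * real k) = exp (- c) ^ k"
      by (metis exp_of_nat_mult mult.commute)
    then have "exp (- c * real k) * (l ^ k / fact k * exp (- l)) = a k"
      by (simp add: a_def power_mult_distrib divide_inverse ac_simps)
    then show ?thesis
      using law[of k] l by (simp add: emeasure_eq_measure ennreal_mult'[symmetric])
  qed
  have "(\<integral>\<^sup>+\<omega>. ennreal (exp (- c * real (X \<omega>))) \<partial>M)
      = (\<Sum>k. ennreal (exp (- c * real k)) * emeasure M {\<omega>\<in>space M. X \<omega> = k})"
    by (rule nn_integral_nat_valued[OF X])
  also have "\<dots> = (\<Sum>k. ennreal (a k))"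
    by (simp only: terms)
  also have "\<dots> = ennreal (exp (- l) * exp (l * exp (- c)))"
    unfolding sums_unique[OF a_sums]
    by (rule suminf_ennreal2) (simp add: a_def l, rule sums_summable[OF a_sums])
  finally have "enn2real (\<integral>\<^sup>+\<omega>. ennreal (exp (- c * real (X \<omega>))) \<partial>M) = exp (- l) * exp (l * exp (- c))"
    by simp
  then have "(\<integral>\<omega>. exp (- c * real (X \<omega>)) \<partial>M) = exp (- l) * exp (l * exp (- c))"
    using X by (subst integral_eq_nn_integral) auto
  also have "\<dots> = exp (- (l * (1 - exp (- c))))"
    by (simp add: exp_add[symmetric] algebra_simps)
  finally show ?thesis .
qed

lemma poisson_random_measure_cong:
  assumes "poisson_random_measure M S \<nu> N" and "sets S' = sets S" and "\<And>A. A \<in> sets S \<Longrightarrow> \<nu>' A = \<nu> A"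
  shows "poisson_random_measure M S' \<nu>' N"
  using assms(1) unfolding poisson_random_measure_def sets_eq_imp_space_eq[OF assms(2)] assms(2)
  by (simp add: assms(3) cong: conj_cong)

lemma
  assumes "poisson_random_measure M S \<nu> N" "A \<in> sets S" "\<nu> A < \<infinity>"
  shows poisson_random_measure_count_measurable:
      "(\<lambda>\<omega>. card (N \<omega> \<inter> A)) \<in> measurable M (count_space UNIV)"
    and poisson_random_measure_count_law:
      "measure M {\<omega>\<in>space M. card (N \<omega> \<inter> A) = k} = enn2real (\<nu> A) ^ k / fact k * exp (- enn2real (\<nu> A))"
  using assms(1)[unfolded poisson_random_measure_def, THEN conjunct2, THEN conjunct2, THEN conjunct1,
      THEN bspec, OF assms(2), THEN mp, OF assms(3)]
  by simp_all

lemma poisson_random_measure_indep_counts: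
  fixes A :: "nat \<Rightarrow> 'p set"
  assumes "poisson_random_measure M S \<nu> N" "finite I" "\<And>i. i \<in> I \<Longrightarrow> A i \<in> sets S"
    and "\<And>i. i \<in> I \<Longrightarrow> \<nu> (A i) < \<infinity>" and "disjoint_family_on A I"
  shows "prob_space.indep_vars M (\<lambda>_. count_space UNIV) (\<lambda>i \<omega>. card (N \<omega> \<inter> A i)) I"
  using assms(1)[unfolded poisson_random_measure_def, THEN conjunct2, THEN conjunct2, THEN conjunct2]
    assms(2-) by simp

lemma poisson_random_measure_laplace_disjoint:
  fixes N :: "'w \<Rightarrow> 'p set" and A :: "nat \<Rightarrow> 'p set"
  assumes "prob_space M" and PRM: "poisson_random_measure M S \<nu> N" and I: "finite I"
    and A: "\<And>i. i \<in> I \<Longrightarrow> A i \<in> sets S" "\<And>i. i \<in> I \<Longrightarrow> \<nu> (A i) < \<infinity>"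
    and disj: "disjoint_family_on A I" and c: "\<And>i. i \<in> I \<Longrightarrow> 0 \<le> c i"
  shows "(\<integral>\<omega>. exp (- (\<Sum>i\<in>I. c i * real (card (N \<omega> \<inter> A i)))) \<partial>M)
       = exp (- (\<Sum>i\<in>I. enn2real (\<nu> (A i)) * (1 - exp (- c i))))"
proof -
  interpret prob_space M by fact
  let ?Y = "\<lambda>i \<omega>. exp (- c i * real (card (N \<omega> \<inter> A i)))"
  have count: "(\<lambda>\<omega>. card (N \<omega> \<inter> A i)) \<in> measurable M (count_space UNIV)" if "i \<in> I" for i
    using poisson_random_measure_count_measurable[OF PRM A[OF that]] .
  have indep: "indep_vars (\<lambda>_. borel) ?Y I"
    by (rule indep_vars_compose2[OF poisson_random_measure_indep_counts[OF PRM I A disj]]) auto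
  have integrable: "integrable M (?Y i)" if "i \<in> I" for i
  proof (rule integrable_const_bound[where B=1])
    have "(\<lambda>\<omega>. real (card (N \<omega> \<inter> A i))) \<in> borel_measurable M"
      using measurable_compose[OF count[OF that], of real borel] by simp
    then show "?Y i \<in> borel_measurable M"
      by measurable
    show "AE \<omega> in M. norm (?Y i \<omega>) \<le> 1"
      using c[OF that] by simp
  qed
  have "(\<integral>\<omega>. exp (- (\<Sum>i\<in>I. c i * real (card (N \<omega> \<inter> A i)))) \<partial>M) = (\<integral>\<omega>. (\<Prod>i\<in>I. ?Y i \<omega>) \<partial>M)"
    by (simp add: exp_sum[OF I, symmetric] sum_negf[symmetric])
  also have "\<dots> = (\<Prod>i\<in>I. \<integral>\<omega>. ?Y i \<omega> \<partial>M)"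
    by (rule indep_vars_lebesgue_integral[OF I indep integrable])
  also have "\<dots> = (\<Prod>i\<in>I. exp (- (enn2real (\<nu> (A i)) * (1 - exp (- c i)))))"
    using A c by (intro prod.cong refl poisson_laplace_transform[OF prob_space_axioms count]
        poisson_random_measure_count_law[OF PRM]) auto
  also have "\<dots> = exp (- (\<Sum>i\<in>I. enn2real (\<nu> (A i)) * (1 - exp (- c i))))"
    by (simp add: exp_sum[OF I, symmetric] sum_negf[symmetric])
  finally show ?thesis .
qed

lemma sum_by_level_sets:
  fixes K :: "'p \<Rightarrow> nat" and c :: "nat \<Rightarrow> 'a::semiring_1"
  assumes "finite F" "finite I" "\<And>p. K p \<in> I"
  shows "(\<Sum>p\<in>F. c (K p)) = (\<Sum>k\<in>I. c k * of_nat (card (F \<inter> K -` {k})))"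
proof -
  have "(\<Sum>p\<in>F. c (K p)) = (\<Sum>k\<in>I. \<Sum>p\<in>{p\<in>F. K p = k}. c (K p))"
    by (rule sum.group[symmetric]) (use assms in auto)
  also have "\<dots> = (\<Sum>k\<in>I. c k * of_nat (card (F \<inter> K -` {k})))"
  proof (rule sum.cong[OF refl])
    fix k
    have "(\<Sum>p\<in>{p\<in>F. K p = k}. c (K p)) = (\<Sum>p\<in>F \<inter> K -` {k}. c k)"
      by (rule sum.cong) auto
    then show "(\<Sum>p\<in>{p\<in>F. K p = k}. c (K p)) = c k * of_nat (card (F \<inter> K -` {k}))"
      by (simp add: mult_of_nat_commute)
  qed
  finally show ?thesis .
qed

lemma level_set_finite_measure:
  fixes K :: "'p \<Rightarrow> nat"
  assumes "H \<in> sets \<nu>" "emeasure \<nu> H < \<infinity>" "K \<in> measurable \<nu> (count_space UNIV)"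
  shows "H \<inter> K -` {k} \<in> sets \<nu>" and "emeasure \<nu> (H \<inter> K -` {k}) < \<infinity>"
proof -
  have "H \<inter> K -` {k} = H \<inter> (K -` {k} \<inter> space \<nu>)"
    using sets.sets_into_space[OF assms(1)] by auto
  then show sets: "H \<inter> K -` {k} \<in> sets \<nu>"
    using measurable_sets[OF assms(3), of "{k}"] assms(1) by auto
  show "emeasure \<nu> (H \<inter> K -` {k}) < \<infinity>"
    using emeasure_mono[OF Int_lower1 assms(1), of "K -` {k}"] assms(2) by simp
qed

lemma poisson_random_measure_sum_nat_valued_measurable:
  fixes N :: "'w \<Rightarrow> 'p set" and K :: "'p \<Rightarrow> nat" and c :: "nat \<Rightarrow> real"
  assumes PRM: "poisson_random_measure M \<nu> (emeasure \<nu>) N"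
    and H: "H \<in> sets \<nu>" "emeasure \<nu> H < \<infinity>" and fin: "\<And>\<omega>. \<omega> \<in> space M \<Longrightarrow> finite (N \<omega> \<inter> H)"
    and K: "K \<in> measurable \<nu> (count_space UNIV)" and I: "finite I" "\<And>p. K p \<in> I"
  shows "(\<lambda>\<omega>. \<Sum>p\<in>N \<omega> \<inter> H. c (K p)) \<in> borel_measurable M"
proof -
  have "(\<lambda>\<omega>. real (card (N \<omega> \<inter> (H \<inter> K -` {k})))) \<in> borel_measurable M" for k
    using measurable_compose[OF poisson_random_measure_count_measurable[OF PRM level_set_finite_measure[OF H K]],
        of real borel] by simp
  then have "(\<lambda>\<omega>. \<Sum>k\<in>I. c k * real (card (N \<omega> \<inter> (H \<inter> K -` {k})))) \<in> borel_measurable M"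
    by measurable
  then show ?thesis
    by (rule measurable_cong[THEN iffD1, rotated])
       (simp add: sum_by_level_sets[OF fin I, of _ c] Int_assoc)
qed

lemma poisson_random_measure_laplace_nat_valued:
  fixes N :: "'w \<Rightarrow> 'p set" and K :: "'p \<Rightarrow> nat"
  assumes "prob_space M" and PRM: "poisson_random_measure M \<nu> (emeasure \<nu>) N"
    and H: "H \<in> sets \<nu>" "emeasure \<nu> H < \<infinity>" and fin: "\<And>\<omega>. \<omega> \<in> space M \<Longrightarrow> finite (N \<omega> \<inter> H)"
    and K: "K \<in> measurable \<nu> (count_space UNIV)" and I: "finite I" "\<And>p. K p \<in> I"
    and c: "\<And>k. 0 \<le> c k"
  shows "(\<integral>\<omega>. exp (- (\<Sum>p\<in>N \<omega> \<inter> H. c (K p))) \<partial>M)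
       = exp (- enn2real (\<integral>\<^sup>+p. indicator H p * ennreal (1 - exp (- c (K p))) \<partial>\<nu>))"
proof -
  let ?A = "\<lambda>k. H \<inter> K -` {k}"
  note A = level_set_finite_measure[OF H K]
  have "(\<integral>\<omega>. exp (- (\<Sum>p\<in>N \<omega> \<inter> H. c (K p))) \<partial>M)
      = (\<integral>\<omega>. exp (- (\<Sum>k\<in>I. c k * real (card (N \<omega> \<inter> ?A k)))) \<partial>M)"
    by (rule Bochner_Integration.integral_cong) (simp_all add: sum_by_level_sets[OF fin I, of _ c] Int_assoc)
  also have "\<dots> = exp (- (\<Sum>k\<in>I. enn2real (emeasure \<nu> (?A k)) * (1 - exp (- c k))))"
  proof (rule poisson_random_measure_laplace_disjoint[OF assms(1) PRM I(1)])
    show "disjoint_family_on ?A I"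
      by (auto simp: disjoint_family_on_def)
  qed (rule A c)+
  also have "(\<Sum>k\<in>I. enn2real (emeasure \<nu> (?A k)) * (1 - exp (- c k)))
      = enn2real (\<integral>\<^sup>+p. indicator H p * ennreal (1 - exp (- c (K p))) \<partial>\<nu>)"
  proof -
    have "(\<Sum>k\<in>I. ennreal (1 - exp (- c k)) * indicator (?A k) p)
        = (\<Sum>k\<in>I. if k = K p then ennreal (1 - exp (- c k)) * indicator H p else 0)" for p
      by (intro sum.cong refl) (simp add: indicator_def)
    then have "indicator H p * ennreal (1 - exp (- c (K p)))
        = (\<Sum>k\<in>I. ennreal (1 - exp (- c k)) * indicator (?A k) p)" for p
      using I by (simp add: sum.delta mult.commute)
    then have "(\<integral>\<^sup>+p. indicator H p * ennreal (1 - exp (- c (K p))) \<partial>\<nu>)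
        = (\<Sum>k\<in>I. ennreal (1 - exp (- c k)) * emeasure \<nu> (?A k))"
      using A(1) by (simp add: nn_integral_sum nn_integral_cmult_indicator)
    then show ?thesis
      using A(2) c by (simp add: enn2real_sum ennreal_mult_less_top enn2real_mult mult.commute)
  qed
  finally show ?thesis .
qed

definition dyadic_floor :: "nat \<Rightarrow> real \<Rightarrow> nat" where
  "dyadic_floor n x = min (n * 2 ^ n) (nat \<lfloor>2 ^ n * x\<rfloor>)"

lemma dyadic_floor_le: "dyadic_floor n x \<le> n * 2 ^ n"
  by (simp add: dyadic_floor_def)

lemma measurable_dyadic_floor:
  assumes "g \<in> borel_measurable M"
  shows "(\<lambda>p. dyadic_floor n (g p)) \<in> measurable M (count_space UNIV)"
proof -
  have "(\<lambda>p. \<lfloor>2 ^ n * g p\<rfloor>) \<in> measurable M (count_space UNIV)"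
    using assms by measurable
  from measurable_compose[OF this, of "\<lambda>k. min (n * 2 ^ n) (nat k)" "count_space UNIV"] show ?thesis
    by (simp add: dyadic_floor_def)
qed

lemma dyadic_floor_tendsto:
  assumes x: "0 \<le> x"
  shows "(\<lambda>n. real (dyadic_floor n x) / 2 ^ n) \<longlonglongrightarrow> x"
proof (rule tendsto_sandwich[where f="\<lambda>n. x - 1 / 2 ^ n" and h="\<lambda>n. x"])
  obtain m :: nat where m: "x \<le> m"
    using real_arch_simple by blast
  have floor: "real (dyadic_floor n x) = of_int \<lfloor>2 ^ n * x\<rfloor>" if "m \<le> n" for n
  proof -
    have "2 ^ n * x \<le> real (n * 2 ^ n)"
      using m that by (simp add: mult.commute mult_left_mono)
    then have "nat \<lfloor>2 ^ n * x\<rfloor> \<le> n * 2 ^ n"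
      by (metis floor_mono floor_of_nat nat_int nat_mono)
    then show ?thesis
      using x by (simp add: dyadic_floor_def)
  qed
  show "eventually (\<lambda>n. x - 1 / 2 ^ n \<le> real (dyadic_floor n x) / 2 ^ n) sequentially"
    using eventually_ge_at_top[of m]
  proof eventually_elim
    case (elim n)
    have "2 ^ n * x - 1 \<le> of_int \<lfloor>2 ^ n * x\<rfloor>"
      by linarith
    then have "(2 ^ n * x - 1) / 2 ^ n \<le> of_int \<lfloor>2 ^ n * x\<rfloor> / 2 ^ n"
      by (simp add: divide_right_mono)
    then show ?case
      using floor[OF elim] by (simp add: diff_divide_distrib)
  qed
  show "eventually (\<lambda>n. real (dyadic_floor n x) / 2 ^ n \<le> x) sequentially"
    using eventually_ge_at_top[of m]
  proof eventually_elim
    case (elim n)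
    have "of_int \<lfloor>2 ^ n * x\<rfloor> \<le> 2 ^ n * x"
      by linarith
    then show ?case
      using floor[OF elim] by (simp add: field_simps)
  qed
  show "(\<lambda>n. x - 1 / 2 ^ n) \<longlonglongrightarrow> x"
    using tendsto_diff[OF tendsto_const[of x] LIMSEQ_divide_realpow_zero[of 2 1]] by simp
qed simp

lemma tendsto_laplace_exponent:
  fixes g :: "nat \<Rightarrow> 'p \<Rightarrow> real"
  assumes H: "H \<in> sets \<nu>" "emeasure \<nu> H < \<infinity>"
    and g: "\<And>n. g n \<in> borel_measurable \<nu>" and lim: "\<And>p. (\<lambda>n. g n p) \<longlonglongrightarrow> f p"
  shows "(\<lambda>n. enn2real (\<integral>\<^sup>+p. indicator H p * ennreal (1 - exp (- g n p)) \<partial>\<nu>))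
           \<longlonglongrightarrow> enn2real (\<integral>\<^sup>+p. indicator H p * ennreal (1 - exp (- f p)) \<partial>\<nu>)"
proof -
  let ?r = "\<lambda>g p. indicator H p * ennreal (1 - exp (- g p))"
  have "f \<in> borel_measurable \<nu>"
    using borel_measurable_LIMSEQ_real[OF lim g] .
  then have "(\<lambda>n. \<integral>\<^sup>+p. ?r (g n) p \<partial>\<nu>) \<longlonglongrightarrow> (\<integral>\<^sup>+p. ?r f p \<partial>\<nu>)"
  proof (intro nn_integral_dominated_convergence[where w="indicator H"])
    have "(\<lambda>n. ?r (g n) p) \<longlonglongrightarrow> ?r f p" for p
      by (cases "p \<in> H") (auto intro!: tendsto_intros lim)
    then show "AE p in \<nu>. (\<lambda>n. ?r (g n) p) \<longlonglongrightarrow> ?r f p"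
      by simp
    show "AE p in \<nu>. ?r (g n) p \<le> indicator H p" for n
      by (simp add: indicator_def)
    show "(\<integral>\<^sup>+p. indicator H p \<partial>\<nu>) < \<infinity>"
      using H by simp
  qed (use g H(1) in auto)
  moreover have "(\<integral>\<^sup>+p. ?r f p \<partial>\<nu>) \<le> emeasure \<nu> H"
    using H(1) by (auto intro: nn_integral_mono simp: indicator_def simp flip: nn_integral_indicator)
  ultimately have "(\<lambda>n. \<integral>\<^sup>+p. ?r (g n) p \<partial>\<nu>) \<longlonglongrightarrow> ennreal (enn2real (\<integral>\<^sup>+p. ?r f p \<partial>\<nu>))"
    using H(2) by (subst ennreal_enn2real) (auto simp: top_unique)
  then show ?thesis
    by (rule tendsto_enn2real) simp
qed

lemma poisson_random_measure_laplace:
  fixes N :: "'w \<Rightarrow> 'p set" and g :: "'p \<Rightarrow> real"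
  assumes "prob_space M" and PRM: "poisson_random_measure M \<nu> (emeasure \<nu>) N"
    and H: "H \<in> sets \<nu>" "emeasure \<nu> H < \<infinity>" and fin: "\<And>\<omega>. \<omega> \<in> space M \<Longrightarrow> finite (N \<omega> \<inter> H)"
    and g: "g \<in> borel_measurable \<nu>" "\<And>p. 0 \<le> g p"
  shows "(\<integral>\<omega>. exp (- (\<Sum>p\<in>N \<omega> \<inter> H. g p)) \<partial>M)
       = exp (- enn2real (\<integral>\<^sup>+p. indicator H p * ennreal (1 - exp (- g p)) \<partial>\<nu>))"
proof -
  interpret prob_space M by fact
  define K where "K n p = dyadic_floor n (g p)" for n p
  define c where "c n k = real k / 2 ^ n" for n k :: nat
  let ?L = "\<lambda>g \<omega>. exp (- (\<Sum>p\<in>N \<omega> \<inter> H. g p))"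
  let ?R = "\<lambda>g. \<integral>\<^sup>+p. indicator H p * ennreal (1 - exp (- g p)) \<partial>\<nu>"
  have K: "K n \<in> measurable \<nu> (count_space UNIV)" "K n p \<in> {..n * 2 ^ n}" for n p
    using measurable_dyadic_floor[OF g(1)] dyadic_floor_le by (auto simp: K_def[abs_def])
  have c: "0 \<le> c n k" for n k
    by (simp add: c_def)
  have approx: "(\<lambda>n. c n (K n p)) \<longlonglongrightarrow> g p" for p
    unfolding c_def K_def by (rule dyadic_floor_tendsto[OF g(2)])
  have approx_meas: "?L (\<lambda>p. c n (K n p)) \<in> borel_measurable M" for n
    using poisson_random_measure_sum_nat_valued_measurable[OF PRM H fin K(1) finite_atMost K(2), of "c n"] by measurable
  have "(\<lambda>n. \<integral>\<omega>. ?L (\<lambda>p. c n (K n p)) \<omega> \<partial>M) \<longlonglongrightarrow> (\<integral>\<omega>. ?L g \<omega> \<partial>M)"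
  proof (rule integral_dominated_convergence[where w="\<lambda>_. 1"])
    have lim: "(\<lambda>n. ?L (\<lambda>p. c n (K n p)) \<omega>) \<longlonglongrightarrow> ?L g \<omega>" for \<omega>
      by (intro tendsto_intros approx)
    then show "AE \<omega> in M. (\<lambda>n. ?L (\<lambda>p. c n (K n p)) \<omega>) \<longlonglongrightarrow> ?L g \<omega>"
      by simp
    show "?L g \<in> borel_measurable M"
      by (rule borel_measurable_LIMSEQ_real[OF lim approx_meas])
    show "AE \<omega> in M. norm (?L (\<lambda>p. c n (K n p)) \<omega>) \<le> 1" for n
      using c by (simp add: sum_nonneg)
  qed (use approx_meas in auto)
  moreover have "(\<integral>\<omega>. ?L (\<lambda>p. c n (K n p)) \<omega> \<partial>M) = exp (- enn2real (?R (\<lambda>p. c n (K n p))))" for n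
    by (rule poisson_random_measure_laplace_nat_valued[OF prob_space_axioms PRM H fin K(1) finite_atMost K(2) c])
  moreover have "(\<lambda>n. exp (- enn2real (?R (\<lambda>p. c n (K n p))))) \<longlonglongrightarrow> exp (- enn2real (?R g))"
    using K(1) by (intro tendsto_intros tendsto_laplace_exponent[OF H _ approx]) measurable
  ultimately show ?thesis
    by (simp add: LIMSEQ_unique)
qed

lemma measurable_measure_pmf_kernel:
  fixes B :: "'a \<Rightarrow> nat pmf"
  assumes "\<And>n. (\<lambda>s. pmf (B s) n) \<in> borel_measurable N"
  shows "(\<lambda>s. measure_pmf (B s)) \<in> measurable N (subprob_algebra (count_space UNIV))"
proof (rule measurable_subprob_algebra)
  fix A :: "nat set"
  have "emeasure (measure_pmf (B s)) A = (\<Sum>n. ennreal (pmf (B s) n) * indicator A n)" for s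
    by (simp flip: nn_integral_count_space_nat nn_integral_measure_pmf)
  moreover have "(\<lambda>s. \<Sum>n. ennreal (pmf (B s) n) * indicator A n) \<in> borel_measurable N"
    using assms by measurable
  ultimately show "(\<lambda>s. emeasure (measure_pmf (B s)) A) \<in> borel_measurable N"
    by simp
qed (auto intro: subprob_space_measure_pmf)

lemma measurable_PiM_kernel:
  fixes K :: "'a \<Rightarrow> 'b measure"
  assumes prob: "\<And>s. prob_space (K s)" and sets: "\<And>s. sets (K s) = sets X"
    and emeasure: "\<And>A. A \<in> sets X \<Longrightarrow> (\<lambda>s. emeasure (K s) A) \<in> borel_measurable N"
  shows "(\<lambda>s. \<Pi>\<^sub>M i\<in>I. K s) \<in> measurable N (subprob_algebra (\<Pi>\<^sub>M i\<in>I. X))"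
proof (rule measurable_subprob_algebra_generated[where \<Omega>="space (\<Pi>\<^sub>M i\<in>I. X)" and G="prod_algebra I (\<lambda>_. X)"])
  have space: "space (K s) = space X" for s
    using sets by (rule sets_eq_imp_space_eq)
  have prob_PiM: "prob_space (\<Pi>\<^sub>M i\<in>I. K s)" for s
    by (intro prob_space_PiM prob)
  then show "subprob_space (\<Pi>\<^sub>M i\<in>I. K s)" for s
    by (rule prob_space_imp_subprob_space)
  show "sets (\<Pi>\<^sub>M i\<in>I. K s) = sets (\<Pi>\<^sub>M i\<in>I. X)" for s
    by (intro sets_PiM_cong refl sets)
  show "sets (\<Pi>\<^sub>M i\<in>I. X) = sigma_sets (space (\<Pi>\<^sub>M i\<in>I. X)) (prod_algebra I (\<lambda>_. X))"
    by (simp add: sets_PiM space_PiM)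
  show "prod_algebra I (\<lambda>_. X) \<subseteq> Pow (space (\<Pi>\<^sub>M i\<in>I. X))"
    using prod_algebra_sets_into_space by (simp add: space_PiM)
  show "(\<lambda>s. emeasure (\<Pi>\<^sub>M i\<in>I. K s) (space (\<Pi>\<^sub>M i\<in>I. X))) \<in> borel_measurable N"
    using prob_space.emeasure_space_1[OF prob_PiM] by (simp add: space_PiM space)
  fix A assume "A \<in> prod_algebra I (\<lambda>_. X)"
  then obtain J E where A: "A = prod_emb I (\<lambda>_. K s) J (\<Pi>\<^sub>E j\<in>J. E j)" "finite J" "J \<subseteq> I"
      "\<And>j. j \<in> J \<Longrightarrow> E j \<in> sets X" for s
    by (elim prod_algebraE) (auto simp: prod_emb_def space)
  have "emeasure (\<Pi>\<^sub>M i\<in>I. K s) A = (\<Prod>j\<in>J. emeasure (K s) (E j))" for s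
    unfolding A(1)[of s] by (rule emeasure_PiM_emb) (auto simp: A sets prob)
  moreover have "(\<lambda>s. \<Prod>j\<in>J. emeasure (K s) (E j)) \<in> borel_measurable N"
    by (intro borel_measurable_prod_ennreal emeasure A(4))
  ultimately show "(\<lambda>s. emeasure (\<Pi>\<^sub>M i\<in>I. K s) A) \<in> borel_measurable N"
    by simp
qed (rule Int_stable_prod_algebra)

lemma measurable_emeasure_exponential:
  assumes "m \<in> borel_measurable N" "A \<in> sets borel"
  shows "(\<lambda>s. emeasure (density lborel (exponential_density (m s))) A) \<in> borel_measurable N"
proof -
  have "(\<lambda>s. \<integral>\<^sup>+x. ennreal (exponential_density (m s) x) * indicator A x \<partial>lborel) \<in> borel_measurable N"
    unfolding exponential_density_def using assms by measurable
  then show ?thesis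
    using assms(2) by (simp add: emeasure_density)
qed

lemma sets_mark_law:
  "sets (mark_law B mu s) = sets (count_space UNIV \<Otimes>\<^sub>M (\<Pi>\<^sub>M i\<in>(UNIV::nat set). (borel :: real measure)))"
  unfolding mark_law_def by (intro sets_pair_measure_cong sets_PiM_cong) auto

lemma prob_space_mark_law:
  "0 < mu s \<Longrightarrow> prob_space (mark_law B mu s)"
  unfolding mark_law_def
  by (intro prob_space_pair prob_space_measure_pmf prob_space_PiM prob_space_exponential_density)

lemma measurable_mark_law:
  assumes "\<And>n. (\<lambda>s. pmf (B s) n) \<in> borel_measurable borel"
    and "m \<in> borel_measurable borel" and "\<And>s. 0 < m s"
  shows "mark_law B m \<in> measurable borel (subprob_algebra (count_space UNIV \<Otimes>\<^sub>M (\<Pi>\<^sub>M i\<in>(UNIV::nat set). (borel :: real measure))))"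
  unfolding mark_law_def[abs_def]
  using assms
  by (intro measurable_pair_measure measurable_measure_pmf_kernel measurable_PiM_kernel
      measurable_emeasure_exponential prob_space_exponential_density) auto

lemma emeasure_exponential_atMost:
  assumes "0 < m" "0 \<le> c"
  shows "emeasure (density lborel (exponential_density m)) {..c} = ennreal (1 - exp (- m * c))"
  using assms by (simp add: emeasure_erlang_density erlang_CDF_0)

lemma emeasure_exponential_greaterThan:
  assumes m: "0 < m" and c: "0 \<le> c"
  shows "emeasure (density lborel (exponential_density m)) {c<..} = ennreal (exp (- m * c))"
proof -
  interpret E: prob_space "density lborel (exponential_density m)"
    by (rule prob_space_exponential_density[OF m])
  have "E.prob {c<..} = E.prob (space (density lborel (exponential_density m)) - {..c})"
    by (intro arg_cong[where f=E.prob]) auto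
  also have "\<dots> = 1 - E.prob {..c}"
    by (rule E.prob_compl) simp
  also have "E.prob {..c} = 1 - exp (- m * c)"
    using emeasure_exponential_atMost[OF assms] m c by (simp add: E.emeasure_eq_measure)
  finally show ?thesis
    by (simp add: E.emeasure_eq_measure)
qed

lemma nn_integral_exponential_overshoot:
  assumes m: "0 < m" and a: "0 \<le> a" and c: "0 \<le> c"
  shows "(\<integral>\<^sup>+x. ennreal (exp (- a * (x - c))) * indicator {c<..} x \<partial>density lborel (exponential_density m))
       = ennreal (m / (m + a) * exp (- m * c))"
proof -
  define k where "k = m / (m + a) * exp (a * c)"
  have k: "0 \<le> k"
    using m a by (simp add: k_def)
  have "ennreal (exponential_density m x) * (ennreal (exp (- a * (x - c))) * indicator {c<..} x)
      = ennreal k * (ennreal (exponential_density (m + a) x) * indicator {c<..} x)" for x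
  proof (cases "c < x")
    case True
    have "exp (- a * (x - c)) * exp (- x * m) = exp (a * c) * exp (- x * (m + a))"
      by (simp flip: exp_add add: algebra_simps)
    then have "exponential_density m x * exp (- a * (x - c)) = k * exponential_density (m + a) x"
      using True c m a by (simp add: exponential_density_def k_def field_simps)
    then show ?thesis
      using True c m a k by (simp add: indicator_def ennreal_mult'[symmetric] exponential_density_nonneg)
  qed simp
  then have "(\<integral>\<^sup>+x. ennreal (exp (- a * (x - c))) * indicator {c<..} x \<partial>density lborel (exponential_density m))
      = ennreal k * emeasure (density lborel (exponential_density (m + a))) {c<..}"
    by (simp add: nn_integral_density emeasure_density nn_integral_cmult)
  also have "\<dots> = ennreal (m / (m + a) * exp (- m * c))"
  proof -
    have "exp (a * c) * exp (- (m + a) * c) = exp (- m * c)"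
      by (simp flip: exp_add add: algebra_simps)
    then show ?thesis
      using emeasure_exponential_greaterThan[of "m + a" c] m a c k
      by (simp add: k_def ennreal_mult'[symmetric] mult.assoc)
  qed
  finally show ?thesis .
qed

definition customer_cost :: "real \<Rightarrow> real \<Rightarrow> real \<Rightarrow> real \<Rightarrow> real \<Rightarrow> real \<Rightarrow> real" where
  "customer_cost \<alpha> \<beta> \<gamma> t s x =
     \<alpha> * max 0 (x - (t - s)) + \<beta> * of_bool (t < s + x) + \<gamma> * of_bool (0 < s + x \<and> s + x \<le> t)"

definition customer_transform :: "real \<Rightarrow> real \<Rightarrow> real \<Rightarrow> real \<Rightarrow> real \<Rightarrow> real \<Rightarrow> real" where
  "customer_transform \<alpha> \<beta> \<gamma> t s m =
     (1 - exp (- m * (t - s))) * exp (- \<gamma>) + m / (m + \<alpha>) * exp (- \<beta>) * exp (- m * (t - s))"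

lemma customer_transform_bounds:
  assumes "s \<le> t" "0 < m" "0 \<le> \<alpha>" "0 \<le> \<beta>" "0 \<le> \<gamma>"
  shows "0 \<le> customer_transform \<alpha> \<beta> \<gamma> t s m" and "customer_transform \<alpha> \<beta> \<gamma> t s m \<le> 1"
proof -
  define e where "e = exp (- m * (t - s))"
  have e: "0 < e" "e \<le> 1"
    using assms by (simp_all add: e_def)
  have "m / (m + \<alpha>) * exp (- \<beta>) \<le> 1"
    using assms by (intro mult_le_one) auto
  then have "(1 - e) * exp (- \<gamma>) + m / (m + \<alpha>) * exp (- \<beta>) * e \<le> (1 - e) * 1 + 1 * e"
    using assms e by (intro add_mono mult_mono) auto
  then show "customer_transform \<alpha> \<beta> \<gamma> t s m \<le> 1"
    by (simp add: customer_transform_def e_def)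
  show "0 \<le> customer_transform \<alpha> \<beta> \<gamma> t s m"
    using assms e by (simp add: customer_transform_def e_def[symmetric])
qed

lemma nn_integral_exponential_customer_cost:
  assumes s: "0 \<le> s" "s \<le> t" and m: "0 < m" and \<alpha>: "0 \<le> \<alpha>"
  shows "(\<integral>\<^sup>+x. ennreal (exp (- customer_cost \<alpha> \<beta> \<gamma> t s x)) \<partial>density lborel (exponential_density m))
       = ennreal (customer_transform \<alpha> \<beta> \<gamma> t s m)"
proof -
  let ?E = "density lborel (exponential_density m)"
  define c where "c = t - s"
  have c: "0 \<le> c"
    using s by (simp add: c_def)
  have "AE x in ?E. 0 < x"
  proof -
    have "AE x in lborel. x \<noteq> 0"
      by (rule AE_lborel_singleton)
    then show ?thesis
      by (subst AE_density) (auto elim!: eventually_mono simp: exponential_density_def)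
  qed
  then have "AE x in ?E. ennreal (exp (- customer_cost \<alpha> \<beta> \<gamma> t s x))
      = ennreal (exp (- \<gamma>)) * indicator {..c} x + ennreal (exp (- \<beta>)) * (ennreal (exp (- \<alpha> * (x - c))) * indicator {c<..} x)"
    by (rule eventually_mono)
       (use s in \<open>auto simp: customer_cost_def c_def indicator_def ennreal_mult'[symmetric] simp flip: exp_add\<close>)
  then have "(\<integral>\<^sup>+x. ennreal (exp (- customer_cost \<alpha> \<beta> \<gamma> t s x)) \<partial>?E)
      = ennreal (exp (- \<gamma>)) * emeasure ?E {..c}
        + ennreal (exp (- \<beta>)) * (\<integral>\<^sup>+x. ennreal (exp (- \<alpha> * (x - c))) * indicator {c<..} x \<partial>?E)"
    by (simp add: nn_integral_cong_AE nn_integral_add nn_integral_cmult)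
  also have "\<dots> = ennreal (exp (- \<gamma>)) * ennreal (1 - exp (- m * c))
      + ennreal (exp (- \<beta>)) * ennreal (m / (m + \<alpha>) * exp (- m * c))"
    by (simp only: emeasure_exponential_atMost[OF m c] nn_integral_exponential_overshoot[OF m \<alpha> c])
  also have "\<dots> = ennreal (exp (- \<gamma>) * (1 - exp (- m * c)) + exp (- \<beta>) * (m / (m + \<alpha>) * exp (- m * c)))"
  proof -
    have "exp (- m * c) \<le> 1"
      using m c by simp
    then have "0 \<le> exp (- \<gamma>) * (1 - exp (- m * c))" "0 \<le> exp (- \<beta>) * (m / (m + \<alpha>) * exp (- m * c))"
      using m \<alpha> by simp_all
    then show ?thesis
      by (simp only: ennreal_plus[symmetric] ennreal_mult'[symmetric] exp_ge_zero)
  qed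
  also have "\<dots> = ennreal (customer_transform \<alpha> \<beta> \<gamma> t s m)"
    by (simp add: customer_transform_def c_def mult_ac)
  finally show ?thesis .
qed

lemma integral_PiM_prod_iid:
  fixes f :: "'a \<Rightarrow> real"
  assumes "prob_space D" and f: "integrable D f"
  shows "(\<integral>w. (\<Prod>i<b. f (w i)) \<partial>(\<Pi>\<^sub>M i\<in>(UNIV::nat set). D)) = (\<integral>x. f x \<partial>D) ^ b"
proof -
  interpret D: prob_space D by fact
  interpret P: product_prob_space "\<lambda>_::nat. D" UNIV
    by unfold_locales
  have "(\<integral>w. (\<Prod>i<b. f (w i)) \<partial>(\<Pi>\<^sub>M i\<in>UNIV. D))
      = (\<integral>w. (\<lambda>y. \<Prod>i<b. f (y i)) (restrict w {..<b}) \<partial>(\<Pi>\<^sub>M i\<in>UNIV. D))"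
    by (intro Bochner_Integration.integral_cong) auto
  also have "\<dots> = (\<integral>y. (\<Prod>i<b. f (y i)) \<partial>distr (\<Pi>\<^sub>M i\<in>UNIV. D) (\<Pi>\<^sub>M i\<in>{..<b}. D) (\<lambda>w. restrict w {..<b}))"
    using f by (intro integral_distr[symmetric] measurable_restrict_subset) auto
  also have "distr (\<Pi>\<^sub>M i\<in>UNIV. D) (\<Pi>\<^sub>M i\<in>{..<b}. D) (\<lambda>w. restrict w {..<b}) = (\<Pi>\<^sub>M i\<in>{..<b}. D)"
    by (rule P.distr_PiM_restrict_finite) auto
  also have "(\<integral>y. (\<Prod>i<b. f (y i)) \<partial>(\<Pi>\<^sub>M i\<in>{..<b}. D)) = (\<Prod>i<b. \<integral>x. f x \<partial>D)"
    using f by (intro P.product_integral_prod) auto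
  finally show ?thesis
    by simp
qed

lemma nn_integral_compound_laplace:
  fixes h :: "'a \<Rightarrow> real" and q :: "nat pmf"
  assumes "prob_space D" and h: "h \<in> borel_measurable D" "\<And>x. 0 \<le> h x"
  shows "(\<integral>\<^sup>+bw. ennreal (1 - exp (- (\<Sum>i<fst bw. h (snd bw i)))) \<partial>(measure_pmf q \<Otimes>\<^sub>M (\<Pi>\<^sub>M i\<in>(UNIV::nat set). D)))
       = ennreal (\<integral>b. 1 - (\<integral>x. exp (- h x) \<partial>D) ^ b \<partial>measure_pmf q)"
proof -
  interpret D: prob_space D by fact
  let ?W = "\<Pi>\<^sub>M i\<in>(UNIV::nat set). D"
  interpret W: prob_space ?W
    by (intro prob_space_PiM D.prob_space_axioms)
  let ?\<phi> = "\<integral>x. exp (- h x) \<partial>D"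
  have exp_h: "integrable D (\<lambda>x. exp (- h x))"
    using h by (intro D.integrable_const_bound[where B=1]) auto
  have "?\<phi> \<le> (\<integral>x. 1 \<partial>D)"
    using h by (intro integral_mono exp_h) auto
  then have \<phi>: "0 \<le> ?\<phi>" "?\<phi> \<le> 1"
    by (simp_all add: D.prob_space)
  have batch: "(\<integral>\<^sup>+w. ennreal (1 - exp (- (\<Sum>i<b. h (w i)))) \<partial>?W) = ennreal (1 - ?\<phi> ^ b)" for b
  proof -
    have prod: "integrable ?W (\<lambda>w. \<Prod>i<b. exp (- h (w i)))"
      using h by (intro W.integrable_const_bound[where B=1]) (auto intro!: prod_le_1 simp: abs_prod)
    have "exp (- (\<Sum>i<b. h (w i))) = (\<Prod>i<b. exp (- h (w i)))" for w
      by (simp add: exp_sum sum_negf[symmetric])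
    then have "(\<integral>\<^sup>+w. ennreal (1 - exp (- (\<Sum>i<b. h (w i)))) \<partial>?W) = ennreal (\<integral>w. 1 - (\<Prod>i<b. exp (- h (w i))) \<partial>?W)"
      using prod h by (simp add: nn_integral_eq_integral prod_le_1)
    also have "\<dots> = ennreal (1 - ?\<phi> ^ b)"
      using prod by (simp add: W.prob_space integral_PiM_prod_iid[OF D.prob_space_axioms exp_h])
    finally show ?thesis .
  qed
  have meas: "(\<lambda>bw. ennreal (1 - exp (- (\<Sum>i<fst bw. h (snd bw i))))) \<in> borel_measurable (measure_pmf q \<Otimes>\<^sub>M ?W)"
  proof -
    have "(\<lambda>bw. ennreal (1 - exp (- (\<Sum>i<b. h (snd bw i))))) \<in> borel_measurable (measure_pmf q \<Otimes>\<^sub>M ?W)" for b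
      using h(1) by measurable
    moreover have "fst \<in> measurable (measure_pmf q \<Otimes>\<^sub>M ?W) (count_space UNIV)"
      by (rule measurable_compose[OF measurable_fst]) simp
    ultimately show ?thesis
      by (rule measurable_compose_countable') simp
  qed
  have "(\<integral>\<^sup>+bw. ennreal (1 - exp (- (\<Sum>i<fst bw. h (snd bw i)))) \<partial>(measure_pmf q \<Otimes>\<^sub>M ?W))
      = (\<integral>\<^sup>+b. ennreal (1 - ?\<phi> ^ b) \<partial>measure_pmf q)"
    using W.nn_integral_fst[OF meas] by (simp add: batch)
  also have "\<dots> = ennreal (\<integral>b. 1 - ?\<phi> ^ b \<partial>measure_pmf q)"
    using \<phi> by (intro nn_integral_eq_integral measure_pmf.integrable_const_bound[where B=1])
      (auto simp: power_le_one)
  finally show ?thesis .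
qed

definition batch_cost :: "real \<Rightarrow> real \<Rightarrow> real \<Rightarrow> real \<Rightarrow> point \<Rightarrow> real" where
  "batch_cost \<alpha> \<beta> \<gamma> t p = (case p of (s, b, w) \<Rightarrow> \<Sum>i<b. customer_cost \<alpha> \<beta> \<gamma> t s (w i))"

lemma batch_cost_eq:
  "batch_cost \<alpha> \<beta> \<gamma> t (s, b, w) = \<alpha> * (\<Sum>i<b. max 0 (w i - (t - s)))
     + \<beta> * real (card {i. i < b \<and> t < s + w i}) + \<gamma> * real (card {i. i < b \<and> 0 < s + w i \<and> s + w i \<le> t})"
proof -
  have card: "real (card {i. i < b \<and> Q i}) = (\<Sum>i<b. of_bool (Q i))" for Q
    by (simp add: lessThan_def Collect_conj_eq)
  show ?thesis
    by (simp add: batch_cost_def customer_cost_def card sum.distrib sum_distrib_left)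
qed

lemma cost_eq_sum_batch_cost:
  "\<alpha> * workload P t + \<beta> * real (num_in_system P t) + \<gamma> * real (departures P t)
     = (\<Sum>p\<in>arrived P t. batch_cost \<alpha> \<beta> \<gamma> t p)"
proof -
  have "batch_cost \<alpha> \<beta> \<gamma> t p = \<alpha> * (case p of (s, b, w) \<Rightarrow> \<Sum>i<b. max 0 (w i - (t - s)))
      + \<beta> * real (case p of (s, b, w) \<Rightarrow> card {i. i < b \<and> t < s + w i})
      + \<gamma> * real (case p of (s, b, w) \<Rightarrow> card {i. i < b \<and> 0 < s + w i \<and> s + w i \<le> t})" for p
    by (cases p) (simp add: batch_cost_eq)
  then show ?thesis
    by (simp add: workload_def num_in_system_def departures_def sum.distrib sum_distrib_left)
qed

lemma batch_cost_nonneg: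
  "0 \<le> \<alpha> \<Longrightarrow> 0 \<le> \<beta> \<Longrightarrow> 0 \<le> \<gamma> \<Longrightarrow> 0 \<le> batch_cost \<alpha> \<beta> \<gamma> t p"
  by (cases p) (simp add: batch_cost_eq sum_nonneg)

lemma measurable_batch_cost: "batch_cost \<alpha> \<beta> \<gamma> t \<in> borel_measurable point_space"
proof -
  have "(\<lambda>p. \<Sum>i<b. customer_cost \<alpha> \<beta> \<gamma> t (fst p) (snd (snd p) i)) \<in> borel_measurable point_space" for b
    unfolding point_space_def customer_cost_def by measurable
  moreover have "(\<lambda>p. fst (snd p)) \<in> measurable point_space (count_space UNIV)"
    unfolding point_space_def by measurable
  ultimately have "(\<lambda>p. \<Sum>i<fst (snd p). customer_cost \<alpha> \<beta> \<gamma> t (fst p) (snd (snd p) i)) \<in> borel_measurable point_space"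
    by (rule measurable_compose_countable') simp
  then show ?thesis
    by (simp add: batch_cost_def[abs_def] case_prod_unfold)
qed

lemma nn_integral_mark_law_batch_cost:
  assumes s: "0 \<le> s" "s \<le> t" and mu: "0 < mu s" and \<alpha>: "0 \<le> \<alpha>" and \<beta>: "0 \<le> \<beta>" and \<gamma>: "0 \<le> \<gamma>"
  shows "(\<integral>\<^sup>+m. ennreal (1 - exp (- batch_cost \<alpha> \<beta> \<gamma> t (s, m))) \<partial>mark_law B mu s)
       = ennreal (\<integral>b. 1 - customer_transform \<alpha> \<beta> \<gamma> t s (mu s) ^ b \<partial>measure_pmf (B s))"
proof -
  let ?D = "density lborel (exponential_density (mu s))"
  let ?h = "customer_cost \<alpha> \<beta> \<gamma> t s"
  have "?h \<in> borel_measurable borel"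
    unfolding customer_cost_def[abs_def] by measurable
  then have h: "?h \<in> borel_measurable ?D" "\<And>x. 0 \<le> ?h x"
    using \<alpha> \<beta> \<gamma> by (auto simp: customer_cost_def)
  have "(\<integral>x. exp (- ?h x) \<partial>?D) = customer_transform \<alpha> \<beta> \<gamma> t s (mu s)"
    using customer_transform_bounds[OF s(2) mu \<alpha> \<beta> \<gamma>] nn_integral_exponential_customer_cost[OF s mu \<alpha>] h(1)
    by (subst integral_eq_nn_integral) auto
  moreover have "batch_cost \<alpha> \<beta> \<gamma> t (s, m) = (\<Sum>i<fst m. ?h (snd m i))" for m
    by (simp add: batch_cost_def case_prod_unfold)
  ultimately show ?thesis
    unfolding mark_law_def
    using nn_integral_compound_laplace[OF prob_space_exponential_density[OF mu] h, of "B s"] by simp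
qed

lemma batch_exponent_nonneg:
  assumes "s \<le> t" "0 < m" "0 \<le> \<alpha>" "0 \<le> \<beta>" "0 \<le> \<gamma>"
  shows "0 \<le> (\<integral>b. 1 - customer_transform \<alpha> \<beta> \<gamma> t s m ^ b \<partial>measure_pmf q)"
  using customer_transform_bounds[OF assms] by (intro integral_nonneg_AE) (auto simp: power_le_one)

lemma arrived_eq_Int: "arrived Q t = Q \<inter> {p. fst p \<le> t}"
  by (auto simp: arrived_def)

lemma sets_point_space_arrived: "{p::point. fst p \<le> t} \<in> sets point_space"
proof -
  have "{p \<in> space point_space. fst p \<le> t} \<in> sets point_space"
    unfolding point_space_def by measurable
  then show ?thesis
    by (simp add: point_space_def space_pair_measure space_PiM)
qed

(* Marks are only drawn at times s >= 0, where mu s > 0; elsewhere the rate is replaced by 1 so that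
   the mark law is a measurable probability kernel on the whole real line. *)
definition rate_on_nonneg :: "(real \<Rightarrow> real) \<Rightarrow> real \<Rightarrow> real" where
  "rate_on_nonneg mu s = (if 0 \<le> s then mu s else 1)"

definition intensity_measure :: "(real \<Rightarrow> real) \<Rightarrow> (real \<Rightarrow> nat pmf) \<Rightarrow> (real \<Rightarrow> real) \<Rightarrow> point measure" where
  "intensity_measure lam B mu =
     density lborel (\<lambda>s. indicator {0..} s * ennreal (lam s)) \<bind>
       (\<lambda>s. distr (mark_law B (rate_on_nonneg mu) s) point_space (Pair s))"

locale queue_intensity =
  fixes lam mu :: "real \<Rightarrow> real" and B :: "real \<Rightarrow> nat pmf"
  assumes lam_meas: "lam \<in> borel_measurable borel"
    and B_meas: "\<And>n. (\<lambda>s. pmf (B s) n) \<in> borel_measurable borel"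
    and mu_meas: "mu \<in> borel_measurable borel"
    and mu_pos: "\<And>s. 0 \<le> s \<Longrightarrow> 0 < mu s"
begin

lemma measurable_intensity_kernel:
  "(\<lambda>s. distr (mark_law B (rate_on_nonneg mu) s) point_space (Pair s))
     \<in> measurable (density lborel (\<lambda>s. indicator {0..} s * ennreal (lam s))) (subprob_algebra point_space)"
proof -
  have "mark_law B (rate_on_nonneg mu) \<in> measurable borel (subprob_algebra (count_space UNIV \<Otimes>\<^sub>M (\<Pi>\<^sub>M i\<in>(UNIV::nat set). (borel :: real measure))))"
    by (rule measurable_mark_law[OF B_meas]) (use mu_meas mu_pos in \<open>auto simp: rate_on_nonneg_def[abs_def]\<close>)
  then have "(\<lambda>s. distr (mark_law B (rate_on_nonneg mu) s) point_space (Pair s)) \<in> measurable borel (subprob_algebra point_space)"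
    by (rule measurable_distr2[rotated]) (simp add: point_space_def)
  then show ?thesis
    by (simp add: measurable_cong_sets[OF sets_density refl])
qed

lemma sets_intensity_measure: "sets (intensity_measure lam B mu) = sets point_space"
  unfolding intensity_measure_def
  using measurable_intensity_kernel by (rule sets_bind_measurable) simp

lemma nn_integral_intensity_measure:
  assumes f: "f \<in> borel_measurable point_space"
  shows "(\<integral>\<^sup>+p. f p \<partial>intensity_measure lam B mu)
       = (\<integral>\<^sup>+s. indicator {0..} s * ennreal (lam s) * (\<integral>\<^sup>+m. f (s, m) \<partial>mark_law B mu s) \<partial>lborel)"
proof -
  let ?D = "density lborel (\<lambda>s. indicator {0..} s * ennreal (lam s))"
  let ?L = "\<lambda>s. distr (mark_law B (rate_on_nonneg mu) s) point_space (Pair s)"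
  have "(\<integral>\<^sup>+p. f p \<partial>intensity_measure lam B mu) = (\<integral>\<^sup>+s. \<integral>\<^sup>+p. f p \<partial>?L s \<partial>?D)"
    unfolding intensity_measure_def
    by (rule nn_integral_bind[OF f measurable_intensity_kernel])
  also have "\<dots> = (\<integral>\<^sup>+s. indicator {0..} s * ennreal (lam s) * (\<integral>\<^sup>+p. f p \<partial>?L s) \<partial>lborel)"
  proof (rule nn_integral_density)
    show "(\<lambda>s. \<integral>\<^sup>+p. f p \<partial>?L s) \<in> borel_measurable lborel"
      using nn_integral_measurable_subprob_algebra[OF f] measurable_intensity_kernel
      by (simp add: measurable_cong_sets[OF sets_density refl] measurable_lborel2)
  qed (use lam_meas in measurable)
  also have "\<dots> = (\<integral>\<^sup>+s. indicator {0..} s * ennreal (lam s) * (\<integral>\<^sup>+m. f (s, m) \<partial>mark_law B mu s) \<partial>lborel)"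
  proof (rule nn_integral_cong)
    fix s :: real
    have "Pair s \<in> measurable (mark_law B (rate_on_nonneg mu) s) point_space"
      by (simp add: point_space_def measurable_cong_sets[OF sets_mark_law refl])
    then have "(\<integral>\<^sup>+p. f p \<partial>?L s) = (\<integral>\<^sup>+m. f (s, m) \<partial>mark_law B (rate_on_nonneg mu) s)"
      using f by (simp add: nn_integral_distr)
    moreover have "0 \<le> s \<Longrightarrow> mark_law B (rate_on_nonneg mu) s = mark_law B mu s"
      by (simp add: mark_law_def rate_on_nonneg_def)
    ultimately show "indicator {0..} s * ennreal (lam s) * (\<integral>\<^sup>+p. f p \<partial>?L s)
        = indicator {0..} s * ennreal (lam s) * (\<integral>\<^sup>+m. f (s, m) \<partial>mark_law B mu s)"
      by (cases "0 \<le> s") simp_all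
  qed
  finally show ?thesis .
qed

lemma emeasure_intensity_measure:
  assumes A: "A \<in> sets point_space"
  shows "emeasure (intensity_measure lam B mu) A = intensity lam B mu A"
proof -
  have "Pair s -` A \<in> sets (mark_law B mu s)" for s
    using A by (simp add: point_space_def sets_mark_law)
  then have "(\<integral>\<^sup>+m. indicator A (s, m) \<partial>mark_law B mu s) = emeasure (mark_law B mu s) (Pair s -` A)" for s
    by (simp flip: nn_integral_indicator add: indicator_def)
  then show ?thesis
    using A by (simp add: sets_intensity_measure nn_integral_intensity_measure intensity_def
        flip: nn_integral_indicator)
qed

lemma measurable_nn_integral_mark_law:
  assumes f: "f \<in> borel_measurable point_space"
  shows "(\<lambda>s. indicator {0..} s * (\<integral>\<^sup>+m. f (s, m) \<partial>mark_law B mu s)) \<in> borel_measurable borel"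
proof -
  have "mark_law B (rate_on_nonneg mu) \<in> measurable borel (subprob_algebra (count_space UNIV \<Otimes>\<^sub>M (\<Pi>\<^sub>M i\<in>(UNIV::nat set). (borel :: real measure))))"
    by (rule measurable_mark_law[OF B_meas]) (use mu_meas mu_pos in \<open>auto simp: rate_on_nonneg_def[abs_def]\<close>)
  moreover have "(\<lambda>(s, m). f (s, m)) \<in> borel_measurable (borel \<Otimes>\<^sub>M (count_space UNIV \<Otimes>\<^sub>M (\<Pi>\<^sub>M i\<in>(UNIV::nat set). (borel :: real measure))))"
    using f by (simp add: point_space_def)
  ultimately have "(\<lambda>s. \<integral>\<^sup>+m. f (s, m) \<partial>mark_law B (rate_on_nonneg mu) s) \<in> borel_measurable borel"
    by (rule nn_integral_measurable_subprob_algebra2[rotated])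
  moreover have "indicator {0..} s * (\<integral>\<^sup>+m. f (s, m) \<partial>mark_law B mu s)
      = indicator {0..} s * (\<integral>\<^sup>+m. f (s, m) \<partial>mark_law B (rate_on_nonneg mu) s)" for s :: real
    by (cases "0 \<le> s") (simp_all add: mark_law_def rate_on_nonneg_def)
  ultimately show ?thesis
    by simp
qed

lemma emeasure_intensity_measure_arrived_finite:
  assumes lam_nonneg: "\<And>s. 0 \<le> s \<Longrightarrow> 0 \<le> lam s" and lam_int: "set_integrable lborel {0..t} lam"
  shows "emeasure (intensity_measure lam B mu) {p. fst p \<le> t} < \<infinity>"
proof -
  let ?H = "{p::point. fst p \<le> t}"
  have "indicator {0..} s * ennreal (lam s) * (\<integral>\<^sup>+m. indicator ?H (s, m) \<partial>mark_law B mu s)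
      = ennreal (norm (indicator {0..t} s *\<^sub>R lam s))" for s :: real
  proof (cases "0 \<le> s \<and> s \<le> t")
    case True
    then interpret prob_space "mark_law B mu s"
      by (intro prob_space_mark_law mu_pos) simp
    show ?thesis
      using True lam_nonneg[of s] by (simp add: emeasure_space_1)
  qed auto
  then have "emeasure (intensity_measure lam B mu) ?H = (\<integral>\<^sup>+s. ennreal (norm (indicator {0..t} s *\<^sub>R lam s)) \<partial>lborel)"
    using sets_point_space_arrived
    by (simp add: sets_intensity_measure nn_integral_intensity_measure flip: nn_integral_indicator)
  also have "\<dots> < \<infinity>"
    using lam_int by (simp add: set_integrable_def integrable_iff_bounded)
  finally show ?thesis .
qed

lemma laplace_exponent_batch_cost:
  assumes lam_nonneg: "\<And>s. 0 \<le> s \<Longrightarrow> 0 \<le> lam s" and \<alpha>: "0 \<le> \<alpha>" and \<beta>: "0 \<le> \<beta>" and \<gamma>: "0 \<le> \<gamma>"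
  shows "enn2real (\<integral>\<^sup>+p. indicator {p. fst p \<le> t} p * ennreal (1 - exp (- batch_cost \<alpha> \<beta> \<gamma> t p))
            \<partial>intensity_measure lam B mu)
       = (LINT s:{0..t}|lborel. (\<integral>b. 1 - customer_transform \<alpha> \<beta> \<gamma> t s (mu s) ^ b \<partial>measure_pmf (B s)) * lam s)"
proof -
  define E where "E s = (\<integral>b. 1 - customer_transform \<alpha> \<beta> \<gamma> t s (mu s) ^ b \<partial>measure_pmf (B s))" for s
  define F where "F s = indicator {0..t} s * (E s * lam s)" for s
  let ?f = "\<lambda>p. indicator {p::point. fst p \<le> t} p * ennreal (1 - exp (- batch_cost \<alpha> \<beta> \<gamma> t p))"
  have f: "?f \<in> borel_measurable point_space"
    using sets_point_space_arrived measurable_batch_cost by measurable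
  have F_nonneg: "0 \<le> F s" for s
    using batch_exponent_nonneg[of s t "mu s" \<alpha> \<beta> \<gamma> "B s"] mu_pos[of s] lam_nonneg[of s] \<alpha> \<beta> \<gamma>
    by (simp add: F_def E_def indicator_def)
  have pointwise: "indicator {0..} s * ennreal (lam s) * (\<integral>\<^sup>+m. ?f (s, m) \<partial>mark_law B mu s) = ennreal (F s)" for s :: real
  proof (cases "0 \<le> s \<and> s \<le> t")
    case True
    then have "(\<integral>\<^sup>+m. ?f (s, m) \<partial>mark_law B mu s) = ennreal (E s)"
      using nn_integral_mark_law_batch_cost[of s t mu \<alpha> \<beta> \<gamma> B] mu_pos[of s] \<alpha> \<beta> \<gamma> by (simp add: E_def)
    then show ?thesis
      using True F_nonneg[of s] lam_nonneg[of s]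
      by (simp add: F_def ennreal_mult''[symmetric] mult.commute)
  qed (auto simp: F_def)
  have F_meas: "F \<in> borel_measurable lborel"
  proof -
    have "(\<lambda>s. ennreal (lam s) * (indicator {0..} s * (\<integral>\<^sup>+m. ?f (s, m) \<partial>mark_law B mu s))) \<in> borel_measurable borel"
      using measurable_nn_integral_mark_law[OF f] lam_meas by measurable
    then have "(\<lambda>s. enn2real (ennreal (F s))) \<in> borel_measurable borel"
      by (simp add: pointwise[symmetric] mult_ac)
    then show ?thesis
      using F_nonneg by simp
  qed
  have "(\<integral>\<^sup>+p. ?f p \<partial>intensity_measure lam B mu) = (\<integral>\<^sup>+s. ennreal (F s) \<partial>lborel)"
    using f by (simp add: nn_integral_intensity_measure pointwise)
  moreover have "(\<integral>s. F s \<partial>lborel) = enn2real (\<integral>\<^sup>+s. ennreal (F s) \<partial>lborel)"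
    using F_meas F_nonneg by (intro integral_eq_nn_integral) auto
  ultimately show ?thesis
    by (simp add: set_lebesgue_integral_def F_def E_def)
qed


lemma laplace_transform_arrived_cost:
  assumes "prob_space M" and PRM: "poisson_random_measure M point_space (intensity lam B mu) P"
    and fin: "\<And>\<omega>. \<omega> \<in> space M \<Longrightarrow> finite (arrived (P \<omega>) t)"
    and lam_nonneg: "\<And>s. 0 \<le> s \<Longrightarrow> 0 \<le> lam s" and lam_int: "set_integrable lborel {0..t} lam"
    and \<alpha>: "0 \<le> \<alpha>" and \<beta>: "0 \<le> \<beta>" and \<gamma>: "0 \<le> \<gamma>"
  shows "(\<integral>\<omega>. exp (- (\<Sum>p\<in>arrived (P \<omega>) t. batch_cost \<alpha> \<beta> \<gamma> t p)) \<partial>M)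
       = exp (- (LINT s:{0..t}|lborel. (\<integral>b. 1 - customer_transform \<alpha> \<beta> \<gamma> t s (mu s) ^ b \<partial>measure_pmf (B s)) * lam s))"
proof -
  let ?\<nu> = "intensity_measure lam B mu"
  have PRM': "poisson_random_measure M ?\<nu> (emeasure ?\<nu>) P"
    using PRM by (rule poisson_random_measure_cong) (simp_all add: sets_intensity_measure emeasure_intensity_measure)
  have H: "{p. fst p \<le> t} \<in> sets ?\<nu>"
    by (simp add: sets_intensity_measure sets_point_space_arrived)
  have G: "batch_cost \<alpha> \<beta> \<gamma> t \<in> borel_measurable ?\<nu>"
    using measurable_batch_cost by (simp add: measurable_cong_sets[OF sets_intensity_measure refl])
  have "(\<integral>\<omega>. exp (- (\<Sum>p\<in>arrived (P \<omega>) t. batch_cost \<alpha> \<beta> \<gamma> t p)) \<partial>M)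
      = exp (- enn2real (\<integral>\<^sup>+p. indicator {p. fst p \<le> t} p * ennreal (1 - exp (- batch_cost \<alpha> \<beta> \<gamma> t p)) \<partial>?\<nu>))"
    unfolding arrived_eq_Int using fin[unfolded arrived_eq_Int]
    by (intro poisson_random_measure_laplace[OF assms(1) PRM' H
          emeasure_intensity_measure_arrived_finite[OF lam_nonneg lam_int] _ G] batch_cost_nonneg \<alpha> \<beta> \<gamma>)
  then show ?thesis
    by (simp only: laplace_exponent_batch_cost[OF lam_nonneg \<alpha> \<beta> \<gamma>])
qed

end

theorem corollary2:
  fixes M :: "'w measure" and P :: "'w \<Rightarrow> point set"
    and lam mu :: "real \<Rightarrow> real" and B :: "real \<Rightarrow> nat pmf"
    and t \<alpha> \<beta> \<gamma> :: real
  assumes "prob_space M"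
    and lam_nonneg: "\<And>s. 0 \<le> s \<Longrightarrow> 0 \<le> lam s"
    and lam_meas: "lam \<in> borel_measurable borel"
    and lam_loc_int: "\<And>T. set_integrable lborel {0..T} lam"
    and B_meas: "\<And>n. (\<lambda>s. pmf (B s) n) \<in> borel_measurable borel"
    and B_pos: "\<And>s. 0 \<le> s \<Longrightarrow> 0 \<notin> set_pmf (B s)"
    and mu_meas: "mu \<in> borel_measurable borel"
    and mu_pos: "\<And>s. 0 \<le> s \<Longrightarrow> 0 < mu s"
    and locally_finite: "\<And>\<omega> T. \<omega> \<in> space M \<Longrightarrow> finite (arrived (P \<omega>) T)"
    and PRM: "poisson_random_measure M point_space (intensity lam B mu) P"
    and "0 \<le> t" "0 \<le> \<alpha>" "0 \<le> \<beta>" "0 \<le> \<gamma>"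
  shows "(\<integral>\<omega>. exp (- \<alpha> * workload (P \<omega>) t - \<beta> * real (num_in_system (P \<omega>) t)
                     - \<gamma> * real (departures (P \<omega>) t)) \<partial>M)
       = exp (- (LINT s:{0..t}|lborel.
            (\<integral>b. 1 - ((1 - exp (- mu s * (t - s))) * exp (- \<gamma>)
                        + mu s / (mu s + \<alpha>) * exp (- \<beta>) * exp (- mu s * (t - s))) ^ b
              \<partial>measure_pmf (B s)) * lam s))"
proof -
  interpret queue_intensity lam mu B
    using lam_meas B_meas mu_meas mu_pos by unfold_locales
  have "- \<alpha> * workload (P \<omega>) t - \<beta> * real (num_in_system (P \<omega>) t) - \<gamma> * real (departures (P \<omega>) t)
      = - (\<Sum>p\<in>arrived (P \<omega>) t. batch_cost \<alpha> \<beta> \<gamma> t p)" for \<omega>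
    using cost_eq_sum_batch_cost[of \<alpha> "P \<omega>" t \<beta> \<gamma>] by linarith
  then show ?thesis
    using laplace_transform_arrived_cost[OF assms(1) PRM locally_finite lam_nonneg lam_loc_int assms(12-14)]
    by (simp add: customer_transform_def)
qed

end
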